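(* Consider a cellular network with $n$ base stations $\mathcal{N}=\{1,\dots,n\}$, base station $i$ serving a nonempty set $\mathcal{J}_i$ of users (pairwise disjoint), channel gains $g_{kj}>0$, noise power $\sigma^2>0$, and $$f_i(\mathbf{x};\mathbf{r},\mathbf{p})=\sum_{j\in\mathcal{J}_i}\frac{r_{ij}}{\log\Big(1+\frac{p_i g_{ij}}{\sum_{k\ne i} p_k g_{kj} x_k+\sigma^2}\Big)}.$$ Fix a satisfiable rate vector $\mathbf{r}>\mathbf{0}$. Consider two load vectors $\mathbf{x},\mathbf{x}'>\mathbf{0}$ with $\mathbf{x}'\ge\mathbf{x}$ and $\mathbf{x}'\ne\mathbf{x}$. If $\mathbf{x}$ is implementable, then $\mathbf{x}'$ is implementable. Moreover, the respective corresponding power vectors $\mathbf{p}$ and $\mathbf{p}'$ (i.e., $\mathbf{x}=\mathbf{f}(\mathbf{x};\mathbf{r},\mathbf{p})$ and $\mathbf{x}'=\mathbf{f}(\mathbf{x}';\mathbf{r},\mathbf{p}')$) satisfy $\mathbf{p}'<\mathbf{p}$ componentwise.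
   Context: Vector inequalities are componentwise; $\log$ is natural logarithm. A rate vector $\mathbf{r}$ is satisfiable if $\rho(\mathbf{\Lambda}(\mathbf{r}))<1$, where $\rho$ is the spectral radius and $\mathbf{\Lambda}(\mathbf{r})$ has entries $\lambda_{ii}=0$ and $\lambda_{ik}=\sum_{j\in\mathcal{J}_i}g_{kj}r_{ij}/g_{ij}$ for $i\ne k$. Given satisfiable $\mathbf{r}$, a load $\mathbf{x}>\mathbf{0}$ is implementable if there exists $\mathbf{p}>\mathbf{0}$ with $\mathbf{x}=\mathbf{f}(\mathbf{x};\mathbf{r},\mathbf{p})$; for given $\mathbf{x}$ and $\mathbf{r}$ such a power vector is unique. *)

theory Defs
  imports Complex_Main "Jordan_Normal_Form.Spectral_Radius"
begin

text \<open>Base stations are 0,...,n-1 (i.e. i < n). Users have type 'u; J i is the set of users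
  served by base station i; g k j is the channel gain from base station k to user j;
  r i j is the rate requirement of user j at base station i; sigma2 is the noise power.
  Vectors (loads x, powers p) are functions nat => real, only entries i < n matter.\<close>

definition Lambda_mat :: "nat \<Rightarrow> (nat \<Rightarrow> 'u set) \<Rightarrow> (nat \<Rightarrow> 'u \<Rightarrow> real)
    \<Rightarrow> (nat \<Rightarrow> 'u \<Rightarrow> real) \<Rightarrow> complex mat" where
  "Lambda_mat n J g r = mat n n (\<lambda>(i, k). complex_of_real
      (if i = k then 0 else (\<Sum>j\<in>J i. g k j * r i j / g i j)))"

definition satisfiable :: "nat \<Rightarrow> (nat \<Rightarrow> 'u set) \<Rightarrow> (nat \<Rightarrow> 'u \<Rightarrow> real)
    \<Rightarrow> (nat \<Rightarrow> 'u \<Rightarrow> real) \<Rightarrow> bool" where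
  "satisfiable n J g r \<longleftrightarrow> spectral_radius (Lambda_mat n J g r) < 1"

definition load_f :: "nat \<Rightarrow> (nat \<Rightarrow> 'u set) \<Rightarrow> (nat \<Rightarrow> 'u \<Rightarrow> real) \<Rightarrow> real
    \<Rightarrow> nat \<Rightarrow> (nat \<Rightarrow> real) \<Rightarrow> (nat \<Rightarrow> 'u \<Rightarrow> real) \<Rightarrow> (nat \<Rightarrow> real) \<Rightarrow> real" where
  "load_f n J g sigma2 i x r p =
     (\<Sum>j\<in>J i. r i j /
        ln (1 + p i * g i j / ((\<Sum>k\<in>{0..<n} - {i}. p k * g k j * x k) + sigma2)))"

definition pos_vec :: "nat \<Rightarrow> (nat \<Rightarrow> real) \<Rightarrow> bool" where
  "pos_vec n v \<longleftrightarrow> (\<forall>i<n. v i > 0)"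

definition implements :: "nat \<Rightarrow> (nat \<Rightarrow> 'u set) \<Rightarrow> (nat \<Rightarrow> 'u \<Rightarrow> real) \<Rightarrow> real
    \<Rightarrow> (nat \<Rightarrow> 'u \<Rightarrow> real) \<Rightarrow> (nat \<Rightarrow> real) \<Rightarrow> (nat \<Rightarrow> real) \<Rightarrow> bool" where
  "implements n J g sigma2 r x p \<longleftrightarrow>
     pos_vec n p \<and> (\<forall>i<n. x i = load_f n J g sigma2 i x r p)"

definition implementable :: "nat \<Rightarrow> (nat \<Rightarrow> 'u set) \<Rightarrow> (nat \<Rightarrow> 'u \<Rightarrow> real) \<Rightarrow> real
    \<Rightarrow> (nat \<Rightarrow> 'u \<Rightarrow> real) \<Rightarrow> (nat \<Rightarrow> real) \<Rightarrow> bool" where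
  "implementable n J g sigma2 r x \<longleftrightarrow>
     pos_vec n x \<and> (\<exists>p. implements n J g sigma2 r x p)"

end

theory Submission
  imports Defs
begin

text \<open>Writing q_k = p_k x_k, the load equation of cell i becomes
  \<Sum>_j r_ij / C(x_i, c_ij(q)) = 1, where C(a, c) = a ln(1 + c/a) is increasing in both arguments
  and the SINR c_ij(q) = q_i g_ij / (\<Sum>_{k\<noteq>i} q_k g_kj + \<sigma>^2) does not decrease when q is
  scaled by \<gamma> \<ge> 1, and increases strictly when \<gamma> > 1, because of the noise.

  Raising the loads from x to x' turns the solution q for x into an upper solution for x'.
  Letting every cell lower its own q_i to the value that balances its equation against the
  current interference gives a decreasing sequence of upper solutions, bounded below, whose
  limit solves the equation for x'.

  For any solution q' for x', take the cell i maximising \<gamma> = q'_i / q_i. If \<gamma> \<ge> 1, the SINRs of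
  cell i under q' dominate those under q, strictly unless \<gamma> = 1, x'_i = x_i and q' = q off i; this
  contradicts the two equations at i or x' \<noteq> x. Hence q' < q, and p'_i = q'_i / x'_i < q_i / x_i = p_i.\<close>

definition capacity :: "real \<Rightarrow> real \<Rightarrow> real" where
  "capacity a c = a * ln (1 + c / a)"

lemma capacity_pos: "0 < a \<Longrightarrow> 0 < c \<Longrightarrow> 0 < capacity a c"
  unfolding capacity_def by (simp add: ln_gt_zero)

lemma capacity_strict_mono_share:
  assumes "0 < a" "a < a'" "0 < c"
  shows "capacity a c < capacity a' c"
  unfolding capacity_def
proof (rule DERIV_pos_imp_increasing[OF assms(2)])
  fix t assume "a \<le> t" "t \<le> a'"
  then have t: "0 < t" using assms by simp
  have "DERIV (\<lambda>t. t * ln (1 + c / t)) t :> 1 * ln (1 + c / t) + t * ((- c / t\<^sup>2) / (1 + c / t))"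
    using t assms by (auto intro!: derivative_eq_intros simp: power2_eq_square add_pos_pos)
  moreover have "t * ((- c / t\<^sup>2) / (1 + c / t)) = - ((c / t) / (1 + c / t))"
    using t by (simp add: power2_eq_square)
  moreover have "(c / t) / (1 + c / t) < ln (1 + c / t)"
    using ln_add1_gt[of "c / t"] t assms by (simp add: add.commute)
  ultimately show "\<exists>y. DERIV (\<lambda>t. t * ln (1 + c / t)) t :> y \<and> 0 < y"
    by auto
qed

lemma capacity_less:
  assumes "0 < a" "a \<le> a'" "0 < c" "c \<le> c'" "a < a' \<or> c < c'"
  shows "capacity a c < capacity a' c'"
proof -
  have a': "0 < a'" using assms by simp
  have share_strict: "a < a' \<Longrightarrow> capacity a c < capacity a' c"
    using capacity_strict_mono_share assms by blast
  then have share: "capacity a c \<le> capacity a' c"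
    using assms(2) by (cases "a = a'") auto
  have sinr: "capacity a' c \<le> capacity a' c'" "c < c' \<Longrightarrow> capacity a' c < capacity a' c'"
    using assms a' by (auto simp: capacity_def add_pos_pos divide_right_mono divide_strict_right_mono)
  show ?thesis using share_strict share sinr assms(5) by linarith
qed

lemma capacity_mono:
  "0 < a \<Longrightarrow> a \<le> a' \<Longrightarrow> 0 < c \<Longrightarrow> c \<le> c' \<Longrightarrow> capacity a c \<le> capacity a' c'"
  using capacity_less[of a a' c c'] by (cases "a < a' \<or> c < c'") auto

locale network =
  fixes n :: nat and J :: "nat \<Rightarrow> 'u set" and g r :: "nat \<Rightarrow> 'u \<Rightarrow> real" and s :: real
  assumes J_fin: "\<And>i. i < n \<Longrightarrow> finite (J i)"
    and J_ne: "\<And>i. i < n \<Longrightarrow> J i \<noteq> {}"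
    and g_pos: "\<And>k j. 0 < g k j"
    and s_pos: "0 < s"
    and r_pos: "\<And>i j. i < n \<Longrightarrow> j \<in> J i \<Longrightarrow> 0 < r i j"
begin

definition interference :: "(nat \<Rightarrow> real) \<Rightarrow> nat \<Rightarrow> 'u \<Rightarrow> real" where
  "interference b i j = (\<Sum>k\<in>{0..<n} - {i}. b k * g k j) + s"

definition sinr :: "real \<Rightarrow> (nat \<Rightarrow> real) \<Rightarrow> nat \<Rightarrow> 'u \<Rightarrow> real" where
  "sinr t b i j = t * g i j / interference b i j"

definition load :: "(nat \<Rightarrow> real) \<Rightarrow> nat \<Rightarrow> real \<Rightarrow> (nat \<Rightarrow> real) \<Rightarrow> real" where
  "load y i t b = (\<Sum>j\<in>J i. r i j / ln (1 + sinr t b i j / y i))"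

lemma load_f_eq_load:
  assumes "i < n" "0 < y i" "\<forall>k<n. q k = p k * y k"
  shows "load_f n J g s i y r p = load y i (q i) q"
  unfolding load_f_def load_def sinr_def interference_def
proof (intro sum.cong refl)
  fix j
  have "(\<Sum>k\<in>{0..<n} - {i}. p k * g k j * y k) = (\<Sum>k\<in>{0..<n} - {i}. q k * g k j)"
    using assms(3) by (intro sum.cong) auto
  then show "r i j / ln (1 + p i * g i j / ((\<Sum>k\<in>{0..<n} - {i}. p k * g k j * y k) + s)) =
      r i j / ln (1 + q i * g i j / ((\<Sum>k\<in>{0..<n} - {i}. q k * g k j) + s) / y i)"
    using assms by simp
qed

lemma fixed_point_of_implements:
  assumes "pos_vec n y" "implements n J g s r y p"
  shows "pos_vec n (\<lambda>k. p k * y k)" "\<forall>i<n. load y i (p i * y i) (\<lambda>k. p k * y k) = y i"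
  using assms load_f_eq_load[of _ y "\<lambda>k. p k * y k" p] unfolding implements_def pos_vec_def
  by simp_all

lemma implements_of_fixed_point:
  assumes y: "pos_vec n y" and q: "pos_vec n q" "\<forall>i<n. load y i (q i) q = y i"
  shows "implements n J g s r y (\<lambda>k. q k / y k)"
  unfolding implements_def
proof (intro conjI allI impI)
  have y_pos: "0 < y k" if "k < n" for k using y that unfolding pos_vec_def by blast
  then show "pos_vec n (\<lambda>k. q k / y k)" using q(1) unfolding pos_vec_def by simp
  fix i assume i: "i < n"
  have "\<forall>k<n. q k = q k / y k * y k" using y_pos by (metis less_irrefl nonzero_eq_divide_eq)
  then show "y i = load_f n J g s i y r (\<lambda>k. q k / y k)"
    using load_f_eq_load[of i y q] i y_pos q(2) by simp
qed

lemma interference_ge: "pos_vec n b \<Longrightarrow> s \<le> interference b i j"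
  unfolding interference_def pos_vec_def
  using g_pos by (auto intro!: sum_nonneg simp: less_imp_le)

lemma interference_pos: "pos_vec n b \<Longrightarrow> 0 < interference b i j"
  using interference_ge s_pos by (meson less_le_trans)

lemma interference_scaled:
  "\<gamma> * interference b i j = (\<Sum>k\<in>{0..<n} - {i}. \<gamma> * b k * g k j) + \<gamma> * s"
  unfolding interference_def distrib_left sum_distrib_left by (simp add: mult.assoc)

lemma interference_scaled_le:
  assumes "1 \<le> \<gamma>" "\<forall>k<n. b' k \<le> \<gamma> * b k"
  shows "interference b' i j \<le> \<gamma> * interference b i j"
proof -
  have "(\<Sum>k\<in>{0..<n} - {i}. b' k * g k j) \<le> (\<Sum>k\<in>{0..<n} - {i}. \<gamma> * b k * g k j)"
    using assms(2) g_pos by (intro sum_mono mult_right_mono) (auto intro: less_imp_le)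
  moreover have "s \<le> \<gamma> * s" using assms(1) s_pos by simp
  ultimately show ?thesis unfolding interference_scaled by (simp add: interference_def)
qed

lemma interference_scaled_less:
  assumes "1 \<le> \<gamma>" "\<forall>k<n. b' k \<le> \<gamma> * b k" "1 < \<gamma> \<or> (\<exists>k<n. k \<noteq> i \<and> b' k < \<gamma> * b k)"
  shows "interference b' i j < \<gamma> * interference b i j"
proof -
  have sum: "(\<Sum>k\<in>{0..<n} - {i}. b' k * g k j) \<le> (\<Sum>k\<in>{0..<n} - {i}. \<gamma> * b k * g k j)"
    "\<exists>k<n. k \<noteq> i \<and> b' k < \<gamma> * b k \<Longrightarrow>
      (\<Sum>k\<in>{0..<n} - {i}. b' k * g k j) < (\<Sum>k\<in>{0..<n} - {i}. \<gamma> * b k * g k j)"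
    using assms(2) g_pos
    by (auto intro!: sum_mono sum_strict_mono_ex1 mult_right_mono intro: less_imp_le)
  have noise: "s \<le> \<gamma> * s" "1 < \<gamma> \<Longrightarrow> s < \<gamma> * s" using assms(1) s_pos by simp_all
  from assms(3) show ?thesis
    unfolding interference_scaled unfolding interference_def
    using sum noise by (elim disjE) (simp_all add: add_less_le_mono add_le_less_mono)
qed

lemma sinr_pos: "0 < t \<Longrightarrow> pos_vec n b \<Longrightarrow> 0 < sinr t b i j"
  unfolding sinr_def using interference_pos g_pos by simp

lemma sinr_scaled_le:
  assumes "0 < t" "pos_vec n b" "pos_vec n b'" "1 \<le> \<gamma>" "\<forall>k<n. b' k \<le> \<gamma> * b k"
  shows "sinr t b i j \<le> sinr (\<gamma> * t) b' i j"
proof -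
  have "sinr t b i j = \<gamma> * t * g i j / (\<gamma> * interference b i j)"
    unfolding sinr_def using assms(4) by simp
  also have "\<dots> \<le> \<gamma> * t * g i j / interference b' i j"
    using assms interference_pos[OF assms(2)] interference_pos[OF assms(3)]
      interference_scaled_le g_pos[of i j]
    by (intro divide_left_mono) auto
  finally show ?thesis unfolding sinr_def .
qed

lemma sinr_scaled_less:
  assumes "0 < t" "pos_vec n b" "pos_vec n b'" "1 \<le> \<gamma>" "\<forall>k<n. b' k \<le> \<gamma> * b k"
    and "1 < \<gamma> \<or> (\<exists>k<n. k \<noteq> i \<and> b' k < \<gamma> * b k)"
  shows "sinr t b i j < sinr (\<gamma> * t) b' i j"
proof -
  have "sinr t b i j = \<gamma> * t * g i j / (\<gamma> * interference b i j)"
    unfolding sinr_def using assms(4) by simp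
  also have "\<dots> < \<gamma> * t * g i j / interference b' i j"
    using assms interference_pos[OF assms(2)] interference_pos[OF assms(3)]
      interference_scaled_less g_pos[of i j]
    by (intro divide_strict_left_mono) auto
  finally show ?thesis unfolding sinr_def .
qed

lemma sinr_antimono:
  assumes "0 < t" "pos_vec n b'" "\<forall>k<n. b' k \<le> b k"
  shows "sinr t b i j \<le> sinr t b' i j"
  using sinr_scaled_le[of t b b' 1] assms unfolding pos_vec_def by force

lemma load_eq_capacity_sum:
  "0 < y i \<Longrightarrow> load y i t b = y i * (\<Sum>j\<in>J i. r i j / capacity (y i) (sinr t b i j))"
  unfolding load_def capacity_def sum_distrib_left by (intro sum.cong) auto

lemma load_antimono:
  assumes "i < n" "0 < y i" "0 < t" "pos_vec n b'" "\<forall>k<n. b' k \<le> b k"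
  shows "load y i t b' \<le> load y i t b"
proof -
  have b: "pos_vec n b" using assms(4,5) unfolding pos_vec_def by force
  have "r i j / capacity (y i) (sinr t b' i j) \<le> r i j / capacity (y i) (sinr t b i j)"
    if "j \<in> J i" for j
    using assms b that sinr_antimono[OF assms(3-5)]
    by (intro divide_left_mono capacity_mono mult_pos_pos capacity_pos sinr_pos)
      (auto intro: less_imp_le r_pos)
  then show ?thesis
    unfolding load_eq_capacity_sum[of y i, OF assms(2)] using assms(2)
    by (intro mult_left_mono sum_mono) auto
qed

lemma load_ge_single_user:
  assumes "i < n" "j \<in> J i" "0 < y i" "0 < t" "pos_vec n b"
  shows "y i * (r i j * s / (t * g i j)) \<le> load y i t b"
proof -
  have c: "0 < sinr t b i j" using sinr_pos assms(4,5) .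
  have rj: "0 < r i j" and gj: "0 < g i j" using r_pos[OF assms(1,2)] g_pos .
  have "sinr t b i j \<le> t * g i j / s"
    unfolding sinr_def
    using interference_ge[OF assms(5)] interference_pos[OF assms(5)] s_pos assms(4) gj
    by (intro divide_left_mono) auto
  then have "sinr t b i j / y i \<le> t * g i j / s / y i"
    by (rule divide_right_mono) (use assms(3) in simp)
  then have ln_le: "ln (1 + sinr t b i j / y i) \<le> t * g i j / s / y i"
    using ln_add_one_self_le_self[of "sinr t b i j / y i"] c assms(3) by simp
  have ln_pos: "0 < ln (1 + sinr t b i j / y i)" using c assms(3) by (simp add: ln_gt_zero)
  have "y i * (r i j * s / (t * g i j)) = r i j / (t * g i j / s / y i)"
    using assms(3,4) gj s_pos by (simp add: field_simps)
  also have "\<dots> \<le> r i j / ln (1 + sinr t b i j / y i)"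
    using ln_le ln_pos rj by (intro divide_left_mono mult_pos_pos) auto
  also have "\<dots> \<le> load y i t b"
    unfolding load_def
  proof (rule member_le_sum[OF assms(2) _ J_fin[OF assms(1)]])
    fix j' assume "j' \<in> J i - {j}"
    then have "0 < r i j'" "0 < sinr t b i j' / y i"
      using r_pos[OF assms(1)] sinr_pos[OF assms(4,5)] assms(3) by auto
    then show "0 \<le> r i j' / ln (1 + sinr t b i j' / y i)" by (simp add: ln_gt_zero)
  qed
  finally show ?thesis .
qed

definition threshold :: "nat \<Rightarrow> real" where
  "threshold i = (let j = SOME j. j \<in> J i in r i j * s / g i j)"

lemma threshold_user: "i < n \<Longrightarrow> \<exists>j\<in>J i. threshold i = r i j * s / g i j"
  unfolding threshold_def Let_def using J_ne some_in_eq by blast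

lemma threshold_pos: "i < n \<Longrightarrow> 0 < threshold i"
  using threshold_user r_pos g_pos s_pos by (metis divide_pos_pos mult_pos_pos)

lemma threshold_le_of_load_le:
  assumes "i < n" "0 < y i" "0 < t" "pos_vec n b" "load y i t b \<le> y i"
  shows "threshold i \<le> t"
proof -
  obtain j where j: "j \<in> J i" "threshold i = r i j * s / g i j"
    using threshold_user[OF assms(1)] by blast
  have "y i * (r i j * s / (t * g i j)) \<le> y i * 1"
    using load_ge_single_user[of i j y t b] assms j(1) by simp
  then have "r i j * s / (t * g i j) \<le> 1" using mult_le_cancel_left_pos[OF assms(2)] by blast
  then have "r i j * s \<le> t * g i j" using assms(3) g_pos[of i j] by (simp add: divide_le_eq)
  then show ?thesis using j(2) g_pos[of i j] by (simp add: divide_le_eq)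
qed

lemma load_ge_of_le_threshold:
  assumes "i < n" "0 < y i" "0 < t" "pos_vec n b" "t \<le> threshold i"
  shows "y i \<le> load y i t b"
proof -
  obtain j where j: "j \<in> J i" "threshold i = r i j * s / g i j"
    using threshold_user[OF assms(1)] by blast
  have "t * g i j \<le> r i j * s"
    using j(2) assms(5) g_pos[of i j] by (simp add: le_divide_eq)
  then have "1 \<le> r i j * s / (t * g i j)" using assms(3) g_pos[of i j] by (simp add: le_divide_eq)
  then have "y i * 1 \<le> y i * (r i j * s / (t * g i j))" using assms(2) by (intro mult_left_mono) auto
  then show ?thesis using load_ge_single_user[of i j y t b] assms j(1) by simp
qed

lemma load_tendsto:
  assumes "(T \<longlongrightarrow> t) F" "\<And>k. k < n \<Longrightarrow> ((\<lambda>x. B x k) \<longlongrightarrow> b k) F"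
    and "0 < t" "pos_vec n b" "0 < y i"
  shows "((\<lambda>x. load y i (T x) (B x)) \<longlongrightarrow> load y i t b) F"
  unfolding load_def
proof (intro tendsto_sum)
  fix j
  have "((\<lambda>x. sinr (T x) (B x) i j) \<longlongrightarrow> sinr t b i j) F"
    unfolding sinr_def interference_def using interference_pos[OF assms(4), of i j]
    by (intro tendsto_intros assms(1,2)) (auto simp: interference_def)
  moreover have "0 < sinr t b i j / y i" using sinr_pos[OF assms(3,4)] assms(5) by simp
  ultimately have "((\<lambda>x. ln (1 + sinr (T x) (B x) i j / y i)) \<longlongrightarrow> ln (1 + sinr t b i j / y i)) F"
    by (intro tendsto_ln tendsto_add tendsto_const tendsto_divide) auto
  then show "((\<lambda>x. r i j / ln (1 + sinr (T x) (B x) i j / y i))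
      \<longlongrightarrow> r i j / ln (1 + sinr t b i j / y i)) F"
    using \<open>0 < sinr t b i j / y i\<close> by (intro tendsto_divide tendsto_const) (auto simp: ln_gt_zero)
qed

lemma load_continuous_on:
  assumes "0 < a" "pos_vec n b" "0 < y i"
  shows "continuous_on {a..c} (\<lambda>t. load y i t b)"
  unfolding continuous_on_def
proof
  fix t assume "t \<in> {a..c}"
  then show "((\<lambda>t. load y i t b) \<longlongrightarrow> load y i t b) (at t within {a..c})"
    using assms by (intro load_tendsto[where B = "\<lambda>_. b"] tendsto_ident_at tendsto_const) auto
qed

definition upper_solution :: "(nat \<Rightarrow> real) \<Rightarrow> (nat \<Rightarrow> real) \<Rightarrow> bool" where
  "upper_solution y b \<longleftrightarrow> pos_vec n b \<and> (\<forall>i<n. load y i (b i) b \<le> y i)"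

lemma upper_solution_ge_threshold:
  "pos_vec n y \<Longrightarrow> upper_solution y b \<Longrightarrow> i < n \<Longrightarrow> threshold i \<le> b i"
  unfolding upper_solution_def pos_vec_def by (blast intro: threshold_le_of_load_le[unfolded pos_vec_def])

lemma exists_balancing_power:
  assumes "pos_vec n y" "upper_solution y b" "i < n"
  shows "\<exists>t. threshold i \<le> t \<and> t \<le> b i \<and> load y i t b = y i"
proof (rule IVT2')
  have y: "0 < y i" and b: "pos_vec n b"
    using assms unfolding pos_vec_def upper_solution_def by auto
  show "load y i (b i) b \<le> y i" using assms(2,3) unfolding upper_solution_def by blast
  show "y i \<le> load y i (threshold i) b"
    using load_ge_of_le_threshold assms(3) y threshold_pos b by blast
  show "threshold i \<le> b i" using upper_solution_ge_threshold assms .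
  show "continuous_on {threshold i..b i} (\<lambda>t. load y i t b)"
    using load_continuous_on threshold_pos[OF assms(3)] b y by blast
qed

definition relax :: "(nat \<Rightarrow> real) \<Rightarrow> (nat \<Rightarrow> real) \<Rightarrow> nat \<Rightarrow> real" where
  "relax y b i = (SOME t. threshold i \<le> t \<and> t \<le> b i \<and> load y i t b = y i)"

lemma relax_spec:
  assumes "pos_vec n y" "upper_solution y b" "i < n"
  shows "threshold i \<le> relax y b i \<and> relax y b i \<le> b i \<and> load y i (relax y b i) b = y i"
  unfolding relax_def using someI_ex[OF exists_balancing_power[OF assms]] .

lemma upper_solution_relax:
  assumes y: "pos_vec n y" and b: "upper_solution y b"
  shows "upper_solution y (relax y b)"
proof -
  have pos: "pos_vec n (relax y b)"
    using relax_spec[OF y b] threshold_pos unfolding pos_vec_def by (meson less_le_trans)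
  have "load y i (relax y b i) (relax y b) \<le> y i" if i: "i < n" for i
  proof -
    have "load y i (relax y b i) (relax y b) \<le> load y i (relax y b i) b"
      using relax_spec[OF y b] pos pos[unfolded pos_vec_def] y[unfolded pos_vec_def] i
      by (intro load_antimono) auto
    then show ?thesis using relax_spec[OF y b i] by simp
  qed
  then show ?thesis using pos unfolding upper_solution_def by blast
qed

lemma exists_fixed_point:
  assumes y: "pos_vec n y" and b: "upper_solution y b"
  shows "\<exists>q. pos_vec n q \<and> (\<forall>i<n. load y i (q i) q = y i)"
proof -
  define Q where "Q k = (relax y ^^ k) b" for k
  have Q_Suc: "Q (Suc k) = relax y (Q k)" for k unfolding Q_def by simp
  have Q: "upper_solution y (Q k)" for k
    by (induction k) (simp_all add: Q_def b upper_solution_relax y)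
  have "\<forall>i\<in>{..<n}. \<exists>l. (\<lambda>k. Q k i) \<longlonglongrightarrow> l \<and> threshold i \<le> l"
  proof
    fix i assume "i \<in> {..<n}"
    then have i: "i < n" by simp
    have "decseq (\<lambda>k. Q k i)"
      using relax_spec[OF y Q i] by (intro decseq_SucI) (simp add: Q_Suc)
    moreover have "\<forall>k. threshold i \<le> Q k i" using upper_solution_ge_threshold[OF y Q i] by blast
    ultimately obtain l where "(\<lambda>k. Q k i) \<longlonglongrightarrow> l" by (rule decseq_convergent)
    moreover have "threshold i \<le> l"
      using calculation upper_solution_ge_threshold[OF y Q i] by (intro LIMSEQ_le_const) auto
    ultimately show "\<exists>l. (\<lambda>k. Q k i) \<longlonglongrightarrow> l \<and> threshold i \<le> l" by blast
  qed
  from bchoice[OF this] obtain q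
    where lim: "\<And>i. i < n \<Longrightarrow> (\<lambda>k. Q k i) \<longlonglongrightarrow> q i"
      and q_ge: "\<And>i. i < n \<Longrightarrow> threshold i \<le> q i"
    by auto
  have q: "pos_vec n q" unfolding pos_vec_def using q_ge threshold_pos by (meson less_le_trans)
  have "load y i (q i) q = y i" if i: "i < n" for i
  proof -
    have yi: "0 < y i" using y i unfolding pos_vec_def by blast
    have "(\<lambda>k. load y i (Q (Suc k) i) (Q k)) \<longlonglongrightarrow> load y i (q i) q"
      using lim i q q[unfolded pos_vec_def] yi by (intro load_tendsto LIMSEQ_Suc) auto
    moreover have "(\<lambda>k. load y i (Q (Suc k) i) (Q k)) = (\<lambda>k. y i)"
      using relax_spec[OF y Q i] by (simp add: Q_Suc)
    ultimately show ?thesis using LIMSEQ_unique[OF tendsto_const] by metis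
  qed
  with q show ?thesis by blast
qed

lemma load_le_iff:
  "0 < y i \<Longrightarrow>
    load y i t b \<le> y i \<longleftrightarrow> (\<Sum>j\<in>J i. r i j / capacity (y i) (sinr t b i j)) \<le> 1"
  using load_eq_capacity_sum[of y i t b] mult_le_cancel_left_pos[of "y i" _ 1] by simp

lemma load_eq_iff:
  "0 < y i \<Longrightarrow>
    load y i t b = y i \<longleftrightarrow> (\<Sum>j\<in>J i. r i j / capacity (y i) (sinr t b i j)) = 1"
  using load_eq_capacity_sum[of y i t b] by simp

lemma upper_solution_of_le:
  assumes x: "pos_vec n x" and le: "\<forall>i<n. x i \<le> x' i"
    and q: "pos_vec n q" "\<forall>i<n. load x i (q i) q = x i"
  shows "upper_solution x' q"
  unfolding upper_solution_def
proof (intro conjI allI impI q(1))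
  fix i assume i: "i < n"
  have pos: "0 < x i" "0 < q i" using x q(1) i unfolding pos_vec_def by blast+
  have x': "0 < x' i" using pos(1) le i by force
  have "0 < sinr (q i) q i j" for j using sinr_pos pos(2) q(1) by blast
  then have "(\<Sum>j\<in>J i. r i j / capacity (x' i) (sinr (q i) q i j))
      \<le> (\<Sum>j\<in>J i. r i j / capacity (x i) (sinr (q i) q i j))"
    using pos le i r_pos
    by (intro sum_mono divide_left_mono capacity_mono mult_pos_pos capacity_pos)
      (auto intro: less_imp_le)
  also have "\<dots> = 1" using pos q(2) i load_eq_iff by blast
  finally show "load x' i (q i) q \<le> x' i" using load_le_iff[of x' i, OF x'] by blast
qed

lemma fixed_point_dominance:
  assumes i: "i < n" and \<gamma>: "1 \<le> \<gamma>" and x: "0 < x i" "x i \<le> x' i"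
    and q: "pos_vec n q" and q': "pos_vec n q'"
    and bound: "\<forall>k<n. q' k \<le> \<gamma> * q k" and q'_i: "q' i = \<gamma> * q i"
    and eq: "load x i (q i) q = x i" and eq': "load x' i (q' i) q' = x' i"
  shows "x' i = x i \<and> \<gamma> = 1 \<and> (\<forall>k<n. k \<noteq> i \<longrightarrow> q' k = q k)"
proof (rule ccontr)
  assume "\<not> ?thesis"
  then have strict: "x i < x' i \<or> 1 < \<gamma> \<or> (\<exists>k<n. k \<noteq> i \<and> q' k < \<gamma> * q k)"
    using x \<gamma> bound by force
  have qi: "0 < q i" "0 < q' i" using q q' i unfolding pos_vec_def by blast+
  have x'_i: "0 < x' i" using x by simp
  have "capacity (x i) (sinr (q i) q i j) < capacity (x' i) (sinr (q' i) q' i j)" for j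
  proof (rule capacity_less)
    show "sinr (q i) q i j \<le> sinr (q' i) q' i j"
      unfolding q'_i using sinr_scaled_le qi(1) q q' \<gamma> bound by blast
    show "x i < x' i \<or> sinr (q i) q i j < sinr (q' i) q' i j"
      unfolding q'_i using strict sinr_scaled_less qi(1) q q' \<gamma> bound by blast
  qed (use x sinr_pos[OF qi(1) q] in auto)
  then have "(\<Sum>j\<in>J i. r i j / capacity (x' i) (sinr (q' i) q' i j))
      < (\<Sum>j\<in>J i. r i j / capacity (x i) (sinr (q i) q i j))"
    using J_fin[OF i] J_ne[OF i] r_pos[OF i] x(1) x'_i sinr_pos[OF qi(1) q] sinr_pos[OF qi(2) q']
    by (intro sum_strict_mono divide_strict_left_mono mult_pos_pos capacity_pos) auto
  then show False using eq eq' x(1) x'_i load_eq_iff by simp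
qed

lemma fixed_point_less:
  assumes x: "pos_vec n x" and le: "\<forall>i<n. x i \<le> x' i" and ne: "\<exists>i<n. x i \<noteq> x' i"
    and q: "pos_vec n q" "\<forall>i<n. load x i (q i) q = x i"
    and q': "pos_vec n q'" "\<forall>i<n. load x' i (q' i) q' = x' i"
  shows "\<forall>k<n. q' k < q k"
proof (rule ccontr)
  assume "\<not> ?thesis"
  then obtain k0 where k0: "k0 < n" "q k0 \<le> q' k0" by (auto simp: not_less)
  define \<gamma> where "\<gamma> = Max ((\<lambda>k. q' k / q k) ` {..<n})"
  obtain i where i: "i < n" "\<gamma> = q' i / q i"
    using Max_in[of "(\<lambda>k. q' k / q k) ` {..<n}"] k0 unfolding \<gamma>_def by fastforce
  have ratio_le: "q' k / q k \<le> \<gamma>" if "k < n" for k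
    unfolding \<gamma>_def using that by (intro Max_ge) auto
  have q_pos: "0 < q k" if "k < n" for k using q(1) that unfolding pos_vec_def by blast
  have bound: "\<forall>k<n. q' k \<le> \<gamma> * q k"
    using ratio_le q_pos by (simp add: divide_le_eq mult.commute)
  have "1 \<le> q' k0 / q k0" using k0 q_pos[OF k0(1)] by simp
  then have \<gamma>: "1 \<le> \<gamma>" using ratio_le[OF k0(1)] by linarith
  have q'_i: "q' i = \<gamma> * q i" using i q_pos[OF i(1)] by simp
  have x_i: "0 < x i" using x i unfolding pos_vec_def by blast
  have "\<gamma> = 1" "\<forall>k<n. k \<noteq> i \<longrightarrow> q' k = q k"
    using fixed_point_dominance[of i \<gamma> x x' q q'] i(1) \<gamma> x_i le bound q'_i q q' by auto
  then have q_eq: "\<forall>k<n. q' k = q k" using q'_i by auto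
  obtain m where m: "m < n" "x m \<noteq> x' m" using ne by blast
  have "0 < x m" using x m(1) unfolding pos_vec_def by blast
  then show False
    using fixed_point_dominance[of m 1 x x' q q'] m le q_eq q q' by auto
qed

end

theorem theorem3:
  fixes n :: nat and J :: "nat \<Rightarrow> 'u set" and g r :: "nat \<Rightarrow> 'u \<Rightarrow> real"
    and sigma2 :: real and x x' p :: "nat \<Rightarrow> real"
  assumes J_fin: "\<And>i. i < n \<Longrightarrow> finite (J i)"
    and J_ne: "\<And>i. i < n \<Longrightarrow> J i \<noteq> {}"
    and J_disj: "\<And>i k. i < n \<Longrightarrow> k < n \<Longrightarrow> i \<noteq> k \<Longrightarrow> J i \<inter> J k = {}"
    and g_pos: "\<And>k j. g k j > 0"
    and sigma_pos: "sigma2 > 0"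
    and r_pos: "\<And>i j. i < n \<Longrightarrow> j \<in> J i \<Longrightarrow> r i j > 0"
    and sat: "satisfiable n J g r"
    and x_pos: "pos_vec n x" and x'_pos: "pos_vec n x'"
    and le: "\<And>i. i < n \<Longrightarrow> x i \<le> x' i"
    and ne: "\<exists>i<n. x i \<noteq> x' i"
    and impl: "implementable n J g sigma2 r x"
    and p: "implements n J g sigma2 r x p"
  shows "implementable n J g sigma2 r x' \<and>
         (\<forall>p'. implements n J g sigma2 r x' p' \<longrightarrow> (\<forall>i<n. p' i < p i))"
proof -
  interpret network n J g r sigma2
    using J_fin J_ne g_pos sigma_pos r_pos by unfold_locales
  have le': "\<forall>i<n. x i \<le> x' i" using le by blast
  define q where "q k = p k * x k" for k
  have q: "pos_vec n q" "\<forall>i<n. load x i (q i) q = x i"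
    using fixed_point_of_implements[OF x_pos p] unfolding q_def .
  have "upper_solution x' q" using upper_solution_of_le[OF x_pos le' q] .
  then obtain q' where q': "pos_vec n q'" "\<forall>i<n. load x' i (q' i) q' = x' i"
    using exists_fixed_point x'_pos by blast
  have "implementable n J g sigma2 r x'"
    using implements_of_fixed_point[OF x'_pos q'] x'_pos unfolding implementable_def by blast
  moreover have "p2 i < p i" if p2: "implements n J g sigma2 r x' p2" and i: "i < n" for p2 i
  proof -
    have "p2 i * x' i < p i * x i"
      using fixed_point_less[OF x_pos le' ne q fixed_point_of_implements[OF x'_pos p2]] i
      unfolding q_def by blast
    moreover have "p2 i * x i \<le> p2 i * x' i" "0 < x i"
      using p2 le[OF i] x_pos i unfolding implements_def pos_vec_def by simp_all
    ultimately have "p2 i * x i < p i * x i" by linarith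
    with \<open>0 < x i\<close> show ?thesis by simp
  qed
  ultimately show ?thesis by blast
qed

end
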